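(* Let $\varphi$ be an automorphism of $E$ of type 4, let $\{e_n\}_{n\in\mathbb{N}}$ be a basis of $L$, and write $\varphi(e_n)=-e_n+2a_n$ with $a_n=(e_n+\varphi(e_n))/2$. Then the family $\{a_n\mid n\in\mathbb{N}\}$ is linearly independent over $F$.
   Context: $F$ is a field of characteristic zero, $L$ an infinite-dimensional $F$-vector space, $E$ the Grassmann algebra of $L$. An automorphism $\varphi$ of $E$ with $\varphi^2=\mathrm{id}$ is of type 4 if for every basis $\gamma$ of $L$ no element $v\in\gamma$ satisfies $\varphi(v)=\pm v$. *)

theory Defs
  imports Main
begin

text \<open>Concrete model of the Grassmann (exterior) algebra E of an infinite-dimensional
F-vector space L with countable basis indexed by nat.  An element of E is a function
from finite subsets of nat (standard monomials e_{i1} ... e_{ik}, i1 < ... < ik) to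
the field F, with finite support.\<close>

definition Ecar :: "(nat set \<Rightarrow> 'a::zero) set" where
  "Ecar = {f. finite {S. f S \<noteq> 0} \<and> (\<forall>S. f S \<noteq> 0 \<longrightarrow> finite S)}"

definition gsign :: "nat set \<Rightarrow> nat set \<Rightarrow> 'a::comm_ring_1" where
  "gsign S T = (-1) ^ card {(i, j). i \<in> S \<and> j \<in> T \<and> j < i}"

definition gadd :: "(nat set \<Rightarrow> 'a::field) \<Rightarrow> (nat set \<Rightarrow> 'a) \<Rightarrow> nat set \<Rightarrow> 'a" where
  "gadd f g = (\<lambda>S. f S + g S)"

definition gneg :: "(nat set \<Rightarrow> 'a::field) \<Rightarrow> nat set \<Rightarrow> 'a" where
  "gneg f = (\<lambda>S. - f S)"

definition gsmult :: "'a::field \<Rightarrow> (nat set \<Rightarrow> 'a) \<Rightarrow> nat set \<Rightarrow> 'a" where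
  "gsmult c f = (\<lambda>S. c * f S)"

text \<open>Product in the exterior algebra: e_S e_T = sign(S,T) e_{S \<union> T} if S, T disjoint, else 0.\<close>
definition gmult :: "(nat set \<Rightarrow> 'a::field) \<Rightarrow> (nat set \<Rightarrow> 'a) \<Rightarrow> nat set \<Rightarrow> 'a" where
  "gmult f g = (\<lambda>U. if finite U then (\<Sum>S\<in>Pow U. gsign S (U - S) * f S * g (U - S)) else 0)"

definition gone :: "nat set \<Rightarrow> 'a::field" where
  "gone = (\<lambda>S. if S = {} then 1 else 0)"

definition Lspace :: "(nat set \<Rightarrow> 'a::field) set" where
  "Lspace = {f \<in> Ecar. \<forall>S. f S \<noteq> 0 \<longrightarrow> card S = 1}"

definition L_lin_indep :: "(nat set \<Rightarrow> 'a::field) set \<Rightarrow> bool" where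
  "L_lin_indep B \<longleftrightarrow> (\<forall>A c. finite A \<and> A \<subseteq> B \<and> (\<lambda>S. \<Sum>v\<in>A. c v * v S) = (\<lambda>S. 0)
       \<longrightarrow> (\<forall>v\<in>A. c v = 0))"

definition is_L_basis :: "(nat set \<Rightarrow> 'a::field) set \<Rightarrow> bool" where
  "is_L_basis B \<longleftrightarrow> B \<subseteq> Lspace \<and> L_lin_indep B \<and>
     (\<forall>x\<in>Lspace. \<exists>A c. finite A \<and> A \<subseteq> B \<and> x = (\<lambda>S. \<Sum>v\<in>A. c v * v S))"

definition is_L_basis_family :: "(nat \<Rightarrow> nat set \<Rightarrow> 'a::field) \<Rightarrow> bool" where
  "is_L_basis_family e \<longleftrightarrow> inj e \<and> is_L_basis (range e)"

text \<open>F-algebra automorphism of E (values outside the carrier are irrelevant).\<close>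
definition is_E_auto :: "((nat set \<Rightarrow> 'a::field) \<Rightarrow> (nat set \<Rightarrow> 'a)) \<Rightarrow> bool" where
  "is_E_auto \<phi> \<longleftrightarrow> bij_betw \<phi> Ecar Ecar \<and>
     (\<forall>f\<in>Ecar. \<forall>g\<in>Ecar. \<phi> (gadd f g) = gadd (\<phi> f) (\<phi> g)) \<and>
     (\<forall>f\<in>Ecar. \<forall>g\<in>Ecar. \<phi> (gmult f g) = gmult (\<phi> f) (\<phi> g)) \<and>
     (\<forall>c. \<forall>f\<in>Ecar. \<phi> (gsmult c f) = gsmult c (\<phi> f)) \<and>
     \<phi> gone = gone"

definition type4 :: "((nat set \<Rightarrow> 'a::field) \<Rightarrow> (nat set \<Rightarrow> 'a)) \<Rightarrow> bool" where
  "type4 \<phi> \<longleftrightarrow> is_E_auto \<phi> \<and> (\<forall>f\<in>Ecar. \<phi> (\<phi> f) = f) \<and>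
     (\<forall>\<gamma>. is_L_basis \<gamma> \<longrightarrow> (\<forall>v\<in>\<gamma>. \<phi> v \<noteq> v \<and> \<phi> v \<noteq> gneg v))"

end

(* Put v = sum c_n e_n.  As phi is linear, sum c_n a_n = (v + phi v)/2, so a vanishing
   combination of the a_n forces phi v = -v.  Every nonzero v in L extends (Zorn) to a basis
   of L, and type 4 forbids phi v = -v on basis vectors; hence v = 0, and the independence
   of the e_n gives c_n = 0. *)

theory Submission
  imports Defs "HOL.Vector_Spaces" "HOL-Library.Function_Algebras"
begin

lemma sum_fun_apply: "(\<Sum>i\<in>A. f i) x = (\<Sum>i\<in>A. f i x)"
  by (induction A rule: infinite_finite_induct) simp_all

interpretation gvec: vector_space "gsmult :: 'a::field \<Rightarrow> (nat set \<Rightarrow> 'a) \<Rightarrow> nat set \<Rightarrow> 'a"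
  by unfold_locales (simp_all add: gsmult_def fun_eq_iff algebra_simps)

lemma lincomb_eq_sum: "(\<lambda>S. \<Sum>n\<in>N. c n * f n S) = (\<Sum>n\<in>N. gsmult (c n) (f n))"
  by (simp add: fun_eq_iff sum_fun_apply gsmult_def)

lemma subspace_Ecar: "gvec.subspace (Ecar :: (nat set \<Rightarrow> 'a::field) set)"
proof (rule gvec.subspaceI)
  show "0 \<in> Ecar" by (simp add: Ecar_def)
next
  fix f g :: "nat set \<Rightarrow> 'a" assume "f \<in> Ecar" "g \<in> Ecar"
  moreover have "{S. (f + g) S \<noteq> 0} \<subseteq> {S. f S \<noteq> 0} \<union> {S. g S \<noteq> 0}" by auto
  ultimately show "f + g \<in> Ecar"
    unfolding Ecar_def by (auto intro: finite_subset)
next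
  fix c and f :: "nat set \<Rightarrow> 'a" assume "f \<in> Ecar"
  moreover have "{S. gsmult c f S \<noteq> 0} \<subseteq> {S. f S \<noteq> 0}" by (auto simp: gsmult_def)
  ultimately show "gsmult c f \<in> Ecar"
    unfolding Ecar_def by (auto intro: finite_subset simp: gsmult_def)
qed

lemma subspace_Lspace: "gvec.subspace (Lspace :: (nat set \<Rightarrow> 'a::field) set)"
proof -
  have "gvec.subspace {f :: nat set \<Rightarrow> 'a. \<forall>S. f S \<noteq> 0 \<longrightarrow> card S = 1}"
    by (rule gvec.subspaceI) (auto simp: gsmult_def, metis add_0)
  then have "gvec.subspace (Ecar \<inter> {f :: nat set \<Rightarrow> 'a. \<forall>S. f S \<noteq> 0 \<longrightarrow> card S = 1})"
    by (intro gvec.subspace_inter subspace_Ecar)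
  then show ?thesis by (simp add: Lspace_def Int_def)
qed

lemma L_lin_indep_iff_independent: "L_lin_indep B \<longleftrightarrow> gvec.independent B"
  unfolding L_lin_indep_def gvec.independent_explicit_module lincomb_eq_sum[where f = "\<lambda>v. v"]
  by (auto simp: zero_fun_def)

lemma is_L_basis_iff: "is_L_basis B \<longleftrightarrow> gvec.independent B \<and> gvec.span B = Lspace"
proof -
  have "(\<forall>x\<in>Lspace. \<exists>A c. finite A \<and> A \<subseteq> B \<and> x = (\<lambda>S. \<Sum>v\<in>A. c v * v S)) \<longleftrightarrow> Lspace \<subseteq> gvec.span B"
    unfolding gvec.span_explicit lincomb_eq_sum[where f = "\<lambda>v. v"] by blast
  moreover have "B \<subseteq> Lspace \<longleftrightarrow> gvec.span B \<subseteq> Lspace"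
    using gvec.span_minimal[OF _ subspace_Lspace] gvec.span_superset by blast
  ultimately show ?thesis
    unfolding is_L_basis_def L_lin_indep_iff_independent by blast
qed

lemma E_auto_zero:
  assumes "is_E_auto \<phi>"
  shows "\<phi> 0 = 0"
proof -
  have "\<phi> 0 = \<phi> (gsmult 0 0)" by (simp add: gsmult_def zero_fun_def)
  also have "\<dots> = gsmult 0 (\<phi> 0)"
    using assms gvec.subspace_0[OF subspace_Ecar] unfolding is_E_auto_def by blast
  also have "\<dots> = 0" by (simp add: gsmult_def zero_fun_def)
  finally show ?thesis .
qed

lemma E_auto_sum:
  assumes "is_E_auto \<phi>" "\<And>i. i \<in> I \<Longrightarrow> f i \<in> Ecar"
  shows "\<phi> (\<Sum>i\<in>I. gsmult (c i) (f i)) = (\<Sum>i\<in>I. gsmult (c i) (\<phi> (f i)))"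
  using assms(2)
proof (induction I rule: infinite_finite_induct)
  case (insert i I)
  have "gsmult (c i) (f i) \<in> Ecar" "(\<Sum>i\<in>I. gsmult (c i) (f i)) \<in> Ecar"
    using insert.prems subspace_Ecar
    by (auto intro: gvec.subspace_scale gvec.subspace_sum)
  then show ?case
    using assms(1) insert by (simp add: is_E_auto_def gadd_def plus_fun_def)
qed (simp_all add: E_auto_zero[OF assms(1)])

lemma type4_antifixed_Lspace_eq_0:
  assumes "type4 \<phi>" "v \<in> Lspace" "\<phi> v = - v"
  shows "v = 0"
proof (rule ccontr)
  assume "v \<noteq> 0"
  then obtain B where "{v} \<subseteq> B" "B \<subseteq> Lspace" "gvec.independent B" "Lspace \<subseteq> gvec.span B"
    using gvec.maximal_independent_subset_extend[of "{v}" Lspace] assms(2) by auto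
  then have "is_L_basis B" "v \<in> B"
    unfolding is_L_basis_iff using gvec.span_minimal[OF _ subspace_Lspace] by auto
  then have "\<phi> v \<noteq> gneg v" using assms(1) unfolding type4_def by blast
  then show False using assms(3) by (simp add: gneg_def fun_Compl_def)
qed

lemma (in module) independentD_inj_family:
  assumes "inj_on e N" "independent (e ` N)" "finite N"
    and "(\<Sum>n\<in>N. c n *s e n) = 0" "n \<in> N"
  shows "c n = 0"
proof -
  have "(\<Sum>u\<in>e ` N. c (inv_into N e u) *s u) = 0"
    using assms(1,4) by (simp add: sum.reindex)
  then have "c (inv_into N e (e n)) = 0"
    using assms(2,3,5) by (intro independentD[of "e ` N"]) auto
  then show ?thesis using assms(1,5) by simp
qed

theorem mainTheorem12:
  fixes \<phi> :: "(nat set \<Rightarrow> 'a::field_char_0) \<Rightarrow> (nat set \<Rightarrow> 'a)"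
    and e :: "nat \<Rightarrow> nat set \<Rightarrow> 'a"
    and a :: "nat \<Rightarrow> nat set \<Rightarrow> 'a"
  assumes "type4 \<phi>"
    and "is_L_basis_family e"
    and "\<And>n. a n = gsmult (1/2) (gadd (e n) (\<phi> (e n)))"
  shows "\<forall>N c. finite N \<and> (\<lambda>S. \<Sum>n\<in>N. c n * a n S) = (\<lambda>S. 0) \<longrightarrow> (\<forall>n\<in>N. c n = 0)"
proof (intro allI impI)
  fix N c
  assume "finite N \<and> (\<lambda>S. \<Sum>n\<in>N. c n * a n S) = (\<lambda>S. 0)"
  then have "finite N" and a_comb: "(\<Sum>n\<in>N. gsmult (c n) (a n)) = 0"
    by (simp_all add: lincomb_eq_sum zero_fun_def)
  have "inj e" "gvec.independent (range e)" "range e \<subseteq> Lspace"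
    using assms(2) gvec.span_superset unfolding is_L_basis_family_def is_L_basis_iff by blast+
  define v where "v = (\<Sum>n\<in>N. gsmult (c n) (e n))"
  have "v \<in> Lspace"
    unfolding v_def using \<open>range e \<subseteq> Lspace\<close>
    by (intro gvec.subspace_sum[OF subspace_Lspace] gvec.subspace_scale[OF subspace_Lspace]) auto
  have "\<phi> v = (\<Sum>n\<in>N. gsmult (c n) (\<phi> (e n)))"
    unfolding v_def using assms(1) \<open>range e \<subseteq> Lspace\<close>
    by (intro E_auto_sum) (auto simp: type4_def Lspace_def)
  then have "(\<Sum>n\<in>N. gsmult (c n) (a n)) = gsmult (1/2) (v + \<phi> v)"
    unfolding v_def assms(3)
    by (simp add: fun_eq_iff sum_fun_apply gsmult_def gadd_def sum_distrib_left sum.distrib algebra_simps)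
  with a_comb have "\<phi> v = - v"
    by (simp add: gvec.scale_eq_0_iff add_eq_0_iff)
  with assms(1) \<open>v \<in> Lspace\<close> have "v = 0"
    by (rule type4_antifixed_Lspace_eq_0)
  moreover have "gvec.independent (e ` N)"
    using \<open>gvec.independent (range e)\<close> by (rule gvec.independent_mono) auto
  ultimately show "\<forall>n\<in>N. c n = 0"
    using gvec.independentD_inj_family[OF inj_on_subset[OF \<open>inj e\<close>]] \<open>finite N\<close>
    unfolding v_def by blast
qed

end
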